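(* Let $N, N_y, M, p \in \mathbb{N}$ with $p\le N$, $X \in \mathbb{R}^{N \times M}$, $Y \in \mathbb{R}^{N_y \times M}$, $\lambda \ge 0$, $\Omega=\{1,\dots,N\}$, and let $\bar s_1,\dots,\bar s_p$ and $\bar S_0\subset\cdots\subset\bar S_p$ be a greedy sequence as defined in the context. Define recursively for $k=1,\dots,p$, starting from empty matrices $\Xi^{(0)}\in\mathbb{R}^{N\times 0}$, $\Theta^{(0)}\in\mathbb{R}^{N_y\times 0}$ (with the conventions $\Xi^{(0)}(\Xi^{(0)}_{\bar s_1})^\top = 0$, $\Theta^{(0)}(\Xi^{(0)}_{\bar s_1})^\top=0$, $[\Xi^{(0)},\xi^{(1)}]=\xi^{(1)}$, $[\Theta^{(0)},\theta^{(1)}]=\theta^{(1)}$): \begin{align*} \delta^{(k)} &= X X_{\bar s_k}^\top + \lambda (I_N)_{\bar s_k}^\top - \Xi^{(k-1)}(\Xi^{(k-1)}_{\bar s_k})^\top \in\mathbb{R}^N,\\ \xi^{(k)} &= \delta^{(k)}/\sqrt{\delta^{(k)}_{\bar s_k}},\qquad \theta^{(k)} = \bigl(Y X_{\bar s_k}^\top - \Theta^{(k-1)}(\Xi^{(k-1)}_{\bar s_k})^\top\bigr)/\sqrt{\delta^{(k)}_{\bar s_k}},\\ \Xi^{(k)} &= [\Xi^{(k-1)}, \xi^{(k)}]\in\mathbb{R}^{N\times k},\qquad \Theta^{(k)} = [\Theta^{(k-1)},\theta^{(k)}]\in\mathbb{R}^{N_y\times k}. \end{align*} Then for every $k\in\{1,\dots,p\}$: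 \begin{align*} \xi^{(k)} &= (Q^{xx}_{\bar s_k}(\bar S_{k-1}))^\top (Q^{xx}_{\bar s_k,\bar s_k}(\bar S_{k-1}))^{-1/2},\\ \theta^{(k)} &= (Q^{xy}_{\bar s_k}(\bar S_{k-1}))^\top (Q^{xx}_{\bar s_k,\bar s_k}(\bar S_{k-1}))^{-1/2},\\ Q^{xx}(\bar S_k) &= Q^{xx}(\bar S_{k-1}) - \xi^{(k)}\xi^{(k)\top} = XX^\top + \lambda I_N - \Xi^{(k)}\Xi^{(k)\top},\\ Q^{xy}(\bar S_k) &= Q^{xy}(\bar S_{k-1}) - \xi^{(k)}\theta^{(k)\top} = XY^\top - \Xi^{(k)}\Theta^{(k)\top}. \end{align*}
   Context: Notation: for a matrix $A$ and an ordered index set $S$, $A_S$ is the submatrix of rows indexed by $S$, $A_{S,S}$ the principal submatrix indexed by $S$; $A_i$ is row $i$ of $A$ (a row vector), $A_{i,i}$ its $(i,i)$ entry; $v_i$ is the $i$th component of a vector $v$; $(I_N)_{s}^\top$ is the $s$th canonical unit vector. $P^{xx} = XX^\top + \lambda I_N$, $P^{xy} = XY^\top$. $Q^{xx}(\emptyset)=P^{xx}$, $Q^{xy}(\emptyset)=P^{xy}$, and for $|S|\ge1$ with $P^{xx}_{S,S}\succ0$: $Q^{xx}(S) = P^{xx} - (P^{xx}_S)^\top (P^{xx}_{S,S})^{-1} P^{xx}_S$, $Q^{xy}(S) = P^{xy} - (P^{xx}_S)^\top (P^{xx}_{S,S})^{-1} P^{xy}_S$. $J(S) = \operatorname{tr}\{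 Y X_S^\top (X_S X_S^\top + \lambda I_{|S|})^{-1} X_S Y^\top \}$ for feasible $S$, $J(\emptyset)=0$. Greedy sequence: $\bar S_0=\emptyset$; for $k=1,\dots,p$, $\mathcal{I}_k = \{ i\in\Omega\setminus\bar S_{k-1} : P^{xx}_{S',S'}\succ0,\ S'=\bar S_{k-1}\cup\{i\}\}$ (assumed nonempty), $\bar s_k \in \arg\max_{i\in\mathcal{I}_k}\{J(\bar S_{k-1}\cup\{i\}) - J(\bar S_{k-1})\}$, $\bar S_k = \bar S_{k-1}\cup\{\bar s_k\}$. *)

theory Defs
  imports "Jordan_Normal_Form.Matrix"
begin

(* Indices are 0-based: Omega = {0..<N}.  Ordered index sets are lists. *)

definition rowsub :: "real mat \<Rightarrow> nat list \<Rightarrow> real mat" where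
  "rowsub A S = mat (length S) (dim_col A) (\<lambda>(i,j). A $$ (S ! i, j))"

definition prinsub :: "real mat \<Rightarrow> nat list \<Rightarrow> real mat" where
  "prinsub A S = mat (length S) (length S) (\<lambda>(i,j). A $$ (S ! i, S ! j))"

definition posdef :: "real mat \<Rightarrow> bool" where
  "posdef A \<longleftrightarrow> A \<in> carrier_mat (dim_row A) (dim_row A) \<and> transpose_mat A = A \<and>
     (\<forall>v \<in> carrier_vec (dim_row A). v \<noteq> 0\<^sub>v (dim_row A) \<longrightarrow> v \<bullet> (A *\<^sub>v v) > 0)"

definition minv :: "real mat \<Rightarrow> real mat" where
  "minv A = (THE B. B \<in> carrier_mat (dim_row A) (dim_row A) \<and>
                    A * B = 1\<^sub>m (dim_row A) \<and> B * A = 1\<^sub>m (dim_row A))"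

definition mtrace :: "real mat \<Rightarrow> real" where
  "mtrace A = (\<Sum>i<dim_row A. A $$ (i,i))"

definition outer :: "real vec \<Rightarrow> real vec \<Rightarrow> real mat" where
  "outer u v = mat (dim_vec u) (dim_vec v) (\<lambda>(i,j). u $ i * v $ j)"

definition append_col :: "real mat \<Rightarrow> real vec \<Rightarrow> real mat" where
  "append_col A v = mat (dim_row A) (Suc (dim_col A))
     (\<lambda>(i,j). if j < dim_col A then A $$ (i,j) else v $ i)"

definition Pxx :: "real mat \<Rightarrow> real \<Rightarrow> real mat" where
  "Pxx X lam = X * transpose_mat X + lam \<cdot>\<^sub>m 1\<^sub>m (dim_row X)"

definition Pxy :: "real mat \<Rightarrow> real mat \<Rightarrow> real mat" where
  "Pxy X Y = X * transpose_mat Y"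

definition Qxx :: "real mat \<Rightarrow> real \<Rightarrow> nat list \<Rightarrow> real mat" where
  "Qxx X lam S = (if S = [] then Pxx X lam else
     Pxx X lam - transpose_mat (rowsub (Pxx X lam) S) * minv (prinsub (Pxx X lam) S)
                   * rowsub (Pxx X lam) S)"

definition Qxy :: "real mat \<Rightarrow> real mat \<Rightarrow> real \<Rightarrow> nat list \<Rightarrow> real mat" where
  "Qxy X Y lam S = (if S = [] then Pxy X Y else
     Pxy X Y - transpose_mat (rowsub (Pxx X lam) S) * minv (prinsub (Pxx X lam) S)
                   * rowsub (Pxy X Y) S)"

definition Jval :: "real mat \<Rightarrow> real mat \<Rightarrow> real \<Rightarrow> nat list \<Rightarrow> real" where
  "Jval X Y lam S = (if S = [] then 0 else
     mtrace (Y * transpose_mat (rowsub X S)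
       * minv (rowsub X S * transpose_mat (rowsub X S) + lam \<cdot>\<^sub>m 1\<^sub>m (length S))
       * rowsub X S * transpose_mat Y))"

definition gset :: "(nat \<Rightarrow> nat) \<Rightarrow> nat \<Rightarrow> nat list" where
  "gset s k = map s [1..<Suc k]"

definition candidates :: "real mat \<Rightarrow> real \<Rightarrow> (nat \<Rightarrow> nat) \<Rightarrow> nat \<Rightarrow> nat set" where
  "candidates X lam s k = {i. i < dim_row X \<and> i \<notin> set (gset s (k - 1)) \<and>
       posdef (prinsub (Pxx X lam) (gset s (k - 1) @ [i]))}"

definition greedy_seq :: "real mat \<Rightarrow> real mat \<Rightarrow> real \<Rightarrow> nat \<Rightarrow> (nat \<Rightarrow> nat) \<Rightarrow> bool" where
  "greedy_seq X Y lam p s \<longleftrightarrow> (\<forall>k \<in> {1..p}.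
     candidates X lam s k \<noteq> {} \<and>
     s k \<in> candidates X lam s k \<and>
     (\<forall>i \<in> candidates X lam s k.
        Jval X Y lam (gset s (k - 1) @ [i]) - Jval X Y lam (gset s (k - 1))
        \<le> Jval X Y lam (gset s k) - Jval X Y lam (gset s (k - 1))))"

definition delta_vec :: "real mat \<Rightarrow> real \<Rightarrow> real mat \<Rightarrow> nat \<Rightarrow> real vec" where
  "delta_vec X lam Xi sk = X *\<^sub>v row X sk + lam \<cdot>\<^sub>v unit_vec (dim_row X) sk - Xi *\<^sub>v row Xi sk"

definition xi_vec :: "real mat \<Rightarrow> real \<Rightarrow> real mat \<Rightarrow> nat \<Rightarrow> real vec" where
  "xi_vec X lam Xi sk = (1 / sqrt (delta_vec X lam Xi sk $ sk)) \<cdot>\<^sub>v delta_vec X lam Xi sk"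

definition theta_vec :: "real mat \<Rightarrow> real mat \<Rightarrow> real \<Rightarrow> real mat \<Rightarrow> real mat \<Rightarrow> nat \<Rightarrow> real vec" where
  "theta_vec X Y lam Xi Th sk = (1 / sqrt (delta_vec X lam Xi sk $ sk))
      \<cdot>\<^sub>v (Y *\<^sub>v row X sk - Th *\<^sub>v row Xi sk)"

primrec XiTheta :: "real mat \<Rightarrow> real mat \<Rightarrow> real \<Rightarrow> (nat \<Rightarrow> nat) \<Rightarrow> nat \<Rightarrow> real mat \<times> real mat" where
  "XiTheta X Y lam s 0 = (0\<^sub>m (dim_row X) 0, 0\<^sub>m (dim_row Y) 0)"
| "XiTheta X Y lam s (Suc k) =
     (let Xi = fst (XiTheta X Y lam s k); Th = snd (XiTheta X Y lam s k) in
       (append_col Xi (xi_vec X lam Xi (s (Suc k))),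
        append_col Th (theta_vec X Y lam Xi Th (s (Suc k)))))"

end

theory Submission
  imports Defs "Jordan_Normal_Form.Determinant"
begin

text \<open>
  Let P = P^{xx}, which is symmetric, let P_{S,S} be positive definite and B be P^{xx} or P^{xy}. Then
  Q(S) = B - P_S^T P_{S,S}^{-1} B_S is the unique matrix of the form B - P_S^T C whose rows
  indexed by S vanish. Appending s to S is therefore one step of Gaussian elimination: the
  rank-one pivot update Z - Z_{.,s} W_{s,.} / Z_{s,s} of Z = Q^{xx}(S), W = Q(S) again has that
  form for S' = S @ [s]. The pivot Z_{s,s} is positive, being the quadratic form of P_{S',S'}
  at a nonzero vector. Since delta^{(k)} is column s_k of P^{xx} - Xi Xi^T, the update is the outer
  product of xi^{(k)} with itself (resp. with theta^{(k)}), and induction on k accumulates these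
  rank-one terms into Xi^{(k)} Xi^{(k)T} and Xi^{(k)} Theta^{(k)T}.
\<close>

lemma mult_mat_entry:
  assumes "A \<in> carrier_mat n k" "B \<in> carrier_mat k m" "i < n" "j < m"
  shows "(A * B) $$ (i,j) = (\<Sum>a<k. A $$ (i,a) * B $$ (a,j))"
  using assms by (auto simp: scalar_prod_def lessThan_atLeast0 intro!: sum.cong)

lemma mult_transpose_entry:
  assumes "A \<in> carrier_mat n k" "B \<in> carrier_mat m k" "i < n" "j < m"
  shows "(A * transpose_mat B) $$ (i,j) = (\<Sum>a<k. A $$ (i,a) * B $$ (j,a))"
  using assms by (auto simp: scalar_prod_def lessThan_atLeast0 intro!: sum.cong)

lemma symmetric_mat_entry:
  assumes "transpose_mat P = P" "i < dim_row P" "j < dim_row P"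
  shows "P $$ (i,j) = P $$ (j,i)"
  by (metis assms index_transpose_mat)

lemma symmetric_mat_row_eq_col:
  assumes "transpose_mat P = P" "i < dim_row P"
  shows "row P i = col P i"
  by (metis assms col_transpose)

lemma append_col_carrier: "A \<in> carrier_mat n j \<Longrightarrow> append_col A u \<in> carrier_mat n (Suc j)"
  unfolding append_col_def by (simp add: carrier_matD)

lemma outer_carrier: "outer u v \<in> carrier_mat (dim_vec u) (dim_vec v)"
  unfolding outer_def by simp

lemma append_col_mult_transpose:
  assumes A: "A \<in> carrier_mat n j" and B: "B \<in> carrier_mat m j"
    and u: "dim_vec u = n" and v: "dim_vec v = m"
  shows "append_col A u * transpose_mat (append_col B v) = A * transpose_mat B + outer u v"
proof (rule eq_matI)
  fix t l assume "t < dim_row (A * transpose_mat B + outer u v)"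
    "l < dim_col (A * transpose_mat B + outer u v)"
  then have t: "t < n" and l: "l < m" using A B u v by (auto simp: outer_def)
  have "(append_col A u * transpose_mat (append_col B v)) $$ (t,l)
      = (\<Sum>a<Suc j. append_col A u $$ (t,a) * append_col B v $$ (l,a))"
    by (rule mult_transpose_entry[OF append_col_carrier[OF A] append_col_carrier[OF B] t l])
  also have "\<dots> = (\<Sum>a<j. A $$ (t,a) * B $$ (l,a)) + u $ t * v $ l"
    using A B t l by (simp add: append_col_def)
  also have "\<dots> = (A * transpose_mat B + outer u v) $$ (t,l)"
    using A B u v t l by (simp add: mult_transpose_entry[OF A B t l] outer_def)
  finally show "(append_col A u * transpose_mat (append_col B v)) $$ (t,l)
      = (A * transpose_mat B + outer u v) $$ (t,l)" .
qed (use A B u v in \<open>auto simp: append_col_def outer_def\<close>)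

lemma posdef_mult_vec_eq_zero:
  assumes "posdef A" "v \<in> carrier_vec (dim_row A)" "A *\<^sub>v v = 0\<^sub>v (dim_row A)"
  shows "v = 0\<^sub>v (dim_row A)"
  using assms scalar_prod_right_zero unfolding posdef_def by (metis less_irrefl)

lemma posdef_minv:
  assumes pd: "posdef A"
  shows "minv A \<in> carrier_mat (dim_row A) (dim_row A) \<and> A * minv A = 1\<^sub>m (dim_row A)"
proof -
  let ?n = "dim_row A"
  have A: "A \<in> carrier_mat ?n ?n" using pd unfolding posdef_def by auto
  have "det A \<noteq> 0"
    using det_0_iff_vec_prod_zero[OF A] posdef_mult_vec_eq_zero[OF pd] by blast
  from det_non_zero_imp_unit[OF A this, of undefined]
  obtain B where B: "B \<in> carrier_mat ?n ?n" "B * A = 1\<^sub>m ?n" "A * B = 1\<^sub>m ?n"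
    unfolding Units_def ring_mat_def by auto
  have "minv A = B" unfolding minv_def
  proof (rule the_equality)
    fix C assume "C \<in> carrier_mat ?n ?n \<and> A * C = 1\<^sub>m ?n \<and> C * A = 1\<^sub>m ?n"
    then have C: "C \<in> carrier_mat ?n ?n" "A * C = 1\<^sub>m ?n" by auto
    have "C = (B * A) * C" using B(2) C(1) by simp
    also have "\<dots> = B * (A * C)" using B(1) A C(1) by (rule assoc_mult_mat)
    finally show "C = B" using B(1) C(2) by simp
  qed (use B in blast)
  then show ?thesis using B by blast
qed

lemma posdef_Nil: "posdef (prinsub A [])"
  unfolding posdef_def prinsub_def by (auto intro!: eq_matI eq_vecI)

text \<open>
  Entrywise Z = B - P_S^T C with Z_S = 0. For symmetric P with P_{S,S} positive definite this
  forces C = P_{S,S}^{-1} B_S, so the predicate characterizes the Schur complement Q(S) without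
  mentioning an inverse.
\<close>
definition schur_residual :: "real mat \<Rightarrow> nat list \<Rightarrow> real mat \<Rightarrow> real mat \<Rightarrow> bool" where
  "schur_residual P S B Z \<longleftrightarrow> Z \<in> carrier_mat (dim_row B) (dim_col B) \<and>
     (\<exists>C. \<forall>t<dim_row B. \<forall>l<dim_col B.
        Z $$ (t,l) = B $$ (t,l) - (\<Sum>a<length S. P $$ (S!a,t) * C a l)) \<and>
     (\<forall>t\<in>set S. \<forall>l<dim_col B. Z $$ (t,l) = 0)"

lemma schur_residual_Nil: "B \<in> carrier_mat n m \<Longrightarrow> schur_residual P [] B B"
  unfolding schur_residual_def by auto

lemma posdef_prinsub_combination_eq_zero:
  assumes sym: "transpose_mat P = P" and S: "set S \<subseteq> {..<dim_row P}" and pd: "posdef (prinsub P S)"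
    and comb: "\<And>b. b < length S \<Longrightarrow> (\<Sum>a<length S. P $$ (S!a,S!b) * x a) = 0"
    and a: "a < length S"
  shows "x a = 0"
proof -
  let ?m = "length S"
  define v where "v = vec ?m x"
  have SP: "S ! b < dim_row P" if "b < ?m" for b using S that by (meson nth_mem subsetD lessThan_iff)
  have "prinsub P S *\<^sub>v v = 0\<^sub>v ?m"
  proof (rule eq_vecI)
    fix b assume "b < dim_vec (0\<^sub>v ?m)"
    then have b: "b < ?m" by simp
    have "(prinsub P S *\<^sub>v v) $ b = (\<Sum>a<?m. P $$ (S!b,S!a) * x a)"
      using b by (simp add: scalar_prod_def lessThan_atLeast0 prinsub_def v_def)
    also have "\<dots> = (\<Sum>a<?m. P $$ (S!a,S!b) * x a)"
      by (intro sum.cong) (simp_all add: symmetric_mat_entry[OF sym SP[OF b] SP])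
    finally show "(prinsub P S *\<^sub>v v) $ b = 0\<^sub>v ?m $ b" using comb b by simp
  qed (simp add: prinsub_def)
  then have "v = 0\<^sub>v ?m"
    using posdef_mult_vec_eq_zero[OF pd] by (simp add: prinsub_def v_def)
  then have "v $ a = 0" using a by simp
  then show ?thesis using a unfolding v_def by simp
qed

lemma schur_residual_unique:
  assumes sym: "transpose_mat P = P" and S: "set S \<subseteq> {..<dim_row P}"
    and B: "dim_row B = dim_row P" and pd: "posdef (prinsub P S)"
    and Z1: "schur_residual P S B Z1" and Z2: "schur_residual P S B Z2"
  shows "Z1 = Z2"
proof -
  let ?m = "length S"
  have SP: "S ! b < dim_row P" if "b < ?m" for b using S that by (meson nth_mem subsetD lessThan_iff)
  have coeffs_solve: "(\<Sum>a<?m. P $$ (S!a,S!b) * C a l) = B $$ (S!b,l)"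
    if "schur_residual P S B Z"
      and "\<forall>t<dim_row B. \<forall>l<dim_col B. Z $$ (t,l) = B $$ (t,l) - (\<Sum>a<?m. P $$ (S!a,t) * C a l)"
      and b: "b < ?m" and l: "l < dim_col B"
    for Z C b l
  proof -
    have "Z $$ (S!b,l) = 0" using that(1) b l unfolding schur_residual_def by auto
    moreover have "Z $$ (S!b,l) = B $$ (S!b,l) - (\<Sum>a<?m. P $$ (S!a,S!b) * C a l)"
      using that(2) l SP[OF b] B by simp
    ultimately show ?thesis by linarith
  qed
  obtain C1 where C1: "\<forall>t<dim_row B. \<forall>l<dim_col B.
      Z1 $$ (t,l) = B $$ (t,l) - (\<Sum>a<?m. P $$ (S!a,t) * C1 a l)"
    using Z1 unfolding schur_residual_def by blast
  obtain C2 where C2: "\<forall>t<dim_row B. \<forall>l<dim_col B.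
      Z2 $$ (t,l) = B $$ (t,l) - (\<Sum>a<?m. P $$ (S!a,t) * C2 a l)"
    using Z2 unfolding schur_residual_def by blast
  have C_eq: "C1 a l = C2 a l" if l: "l < dim_col B" and a: "a < ?m" for a l
  proof -
    have "(\<Sum>a<?m. P $$ (S!a,S!b) * (C1 a l - C2 a l)) = 0" if "b < ?m" for b
      using coeffs_solve[OF Z1 C1 that l] coeffs_solve[OF Z2 C2 that l]
      by (simp add: right_diff_distrib sum_subtractf)
    then show ?thesis
      using posdef_prinsub_combination_eq_zero[OF sym S pd, of "\<lambda>a. C1 a l - C2 a l" a] a by simp
  qed
  show ?thesis
  proof (rule eq_matI)
    fix i j assume "i < dim_row Z2" "j < dim_col Z2"
    then have ij: "i < dim_row B" "j < dim_col B" using Z2 unfolding schur_residual_def by auto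
    then have "(\<Sum>a<?m. P $$ (S!a,i) * C1 a j) = (\<Sum>a<?m. P $$ (S!a,i) * C2 a j)"
      using C_eq by (intro sum.cong) simp_all
    then show "Z1 $$ (i,j) = Z2 $$ (i,j)" using C1 C2 ij by simp
  qed (use Z1 Z2 in \<open>auto simp: schur_residual_def\<close>)
qed

lemma schur_complement_residual:
  assumes P: "P \<in> carrier_mat N N" and sym: "transpose_mat P = P" and S: "set S \<subseteq> {..<N}"
    and pd: "posdef (prinsub P S)" and B: "B \<in> carrier_mat N n"
  shows "schur_residual P S B (B - transpose_mat (rowsub P S) * minv (prinsub P S) * rowsub B S)"
proof -
  let ?m = "length S"
  let ?A = "prinsub P S"
  let ?T = "transpose_mat (rowsub P S)"
  let ?R = "rowsub B S"
  let ?K = "minv ?A * ?R"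
  have A: "?A \<in> carrier_mat ?m ?m" by (simp add: prinsub_def)
  have M: "minv ?A \<in> carrier_mat ?m ?m" "?A * minv ?A = 1\<^sub>m ?m"
    using posdef_minv[OF pd] A by auto
  have T: "?T \<in> carrier_mat N ?m" using P by (simp add: rowsub_def)
  have R: "?R \<in> carrier_mat ?m n" using B by (simp add: rowsub_def)
  have K: "?K \<in> carrier_mat ?m n" using M R by simp
  have SN: "S ! b < N" if "b < ?m" for b using S that by (meson nth_mem subsetD lessThan_iff)
  have assoc: "?T * minv ?A * ?R = ?T * ?K" using T M(1) R by (rule assoc_mult_mat)
  have entry: "(B - ?T * ?K) $$ (t,l) = B $$ (t,l) - (\<Sum>a<?m. P $$ (S!a,t) * ?K $$ (a,l))"
    if "t < N" "l < n" for t l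
    using that T K B P mult_mat_entry[OF T K that] by (simp add: rowsub_def)
  have zero: "(B - ?T * ?K) $$ (S!b,l) = 0" if b: "b < ?m" and l: "l < n" for b l
  proof -
    \<comment> \<open>by symmetry of P the subtracted sum is entry (b,l) of P_{S,S} (P_{S,S}^{-1} B_S) = B_S\<close>
    have "(\<Sum>a<?m. P $$ (S!a,S!b) * ?K $$ (a,l)) = (\<Sum>a<?m. ?A $$ (b,a) * ?K $$ (a,l))"
      using b symmetric_mat_entry[OF sym] SN P by (intro sum.cong) (auto simp: prinsub_def)
    also have "\<dots> = (?A * ?K) $$ (b,l)" using mult_mat_entry[OF A K b l] by simp
    also have "?A * ?K = (?A * minv ?A) * ?R" using A M(1) R by (simp add: assoc_mult_mat)
    also have "\<dots> = ?R" using M(2) R by simp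
    finally show ?thesis using entry[OF SN[OF b] l] b l B by (simp add: rowsub_def)
  qed
  show ?thesis unfolding schur_residual_def assoc
  proof (intro conjI)
    show "B - ?T * ?K \<in> carrier_mat (dim_row B) (dim_col B)"
      using minus_carrier_mat[OF mult_carrier_mat[OF T K]] B by simp
    show "\<exists>C. \<forall>t<dim_row B. \<forall>l<dim_col B.
        (B - ?T * ?K) $$ (t,l) = B $$ (t,l) - (\<Sum>a<?m. P $$ (S!a,t) * C a l)"
      using entry B by (intro exI[of _ "\<lambda>a l. ?K $$ (a,l)"]) simp
    show "\<forall>t\<in>set S. \<forall>l<dim_col B. (B - ?T * ?K) $$ (t,l) = 0"
      using zero B by (auto simp: in_set_conv_nth)
  qed
qed

lemma schur_residual_pivot_quadratic_form:
  assumes P: "P \<in> carrier_mat N N" and sym: "transpose_mat P = P" and S: "set S \<subseteq> {..<N}"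
    and s: "s < N" and Z: "schur_residual P S P Z"
  obtains v where "v \<in> carrier_vec (Suc (length S))" "v \<noteq> 0\<^sub>v (Suc (length S))"
    "v \<bullet> (prinsub P (S @ [s]) *\<^sub>v v) = Z $$ (s,s)"
proof -
  let ?m = "length S"
  let ?S' = "S @ [s]"
  obtain C where C: "\<forall>t<N. \<forall>l<N. Z $$ (t,l) = P $$ (t,l) - (\<Sum>a<?m. P $$ (S!a,t) * C a l)"
    using Z P unfolding schur_residual_def by auto
  have Z_S: "Z $$ (S!b, s) = 0" if "b < ?m" for b
    using Z that s P unfolding schur_residual_def by auto
  have S'N: "?S' ! b < N" if "b < Suc ?m" for b
    using that S s by (cases "b < ?m") (auto simp: nth_append dest: nth_mem)
  \<comment> \<open>P_{S',S'} maps (-C_{.,s}, 1) to column s of Z restricted to S', which vanishes on S\<close>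
  define v where "v = vec (Suc ?m) (\<lambda>a. if a < ?m then - C a s else 1)"
  have Pv: "(prinsub P ?S' *\<^sub>v v) $ b = Z $$ (?S' ! b, s)" if b: "b < Suc ?m" for b
  proof -
    let ?t = "?S' ! b"
    have t: "?t < N" using S'N b .
    have "(prinsub P ?S' *\<^sub>v v) $ b = (\<Sum>a<?m. P $$ (?t, S!a) * (- C a s)) + P $$ (?t, s)"
      using b unfolding prinsub_def v_def
      by (simp add: scalar_prod_def lessThan_atLeast0 nth_append)
    also have "(\<Sum>a<?m. P $$ (?t, S!a) * (- C a s)) = - (\<Sum>a<?m. P $$ (S!a, ?t) * C a s)"
      using symmetric_mat_entry[OF sym] t S P
      by (auto simp: sum_negf[symmetric] dest: nth_mem intro!: sum.cong)
    finally show ?thesis using C t s by simp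
  qed
  have "v \<bullet> (prinsub P ?S' *\<^sub>v v) = (\<Sum>b\<in>{0..<Suc ?m}. v $ b * (prinsub P ?S' *\<^sub>v v) $ b)"
    by (simp add: scalar_prod_def prinsub_def)
  also have "\<dots> = (\<Sum>b\<in>{0..<Suc ?m}. v $ b * Z $$ (?S' ! b, s))"
    by (rule sum.cong) (simp_all add: Pv)
  also have "\<dots> = (\<Sum>b<?m. v $ b * Z $$ (S ! b, s)) + v $ ?m * Z $$ (s, s)"
    by (simp add: nth_append lessThan_atLeast0)
  also have "\<dots> = Z $$ (s,s)"
    using Z_S by (simp add: v_def)
  finally have vPv: "v \<bullet> (prinsub P ?S' *\<^sub>v v) = Z $$ (s,s)" .
  have "v $ ?m \<noteq> 0" unfolding v_def by simp
  then have "v \<noteq> 0\<^sub>v (Suc ?m)" by auto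
  moreover have "v \<in> carrier_vec (Suc ?m)" unfolding v_def by simp
  ultimately show ?thesis using vPv that by blast
qed

lemma schur_residual_pivot_pos:
  assumes P: "P \<in> carrier_mat N N" and sym: "transpose_mat P = P" and S: "set S \<subseteq> {..<N}"
    and s: "s < N" and Z: "schur_residual P S P Z" and pd: "posdef (prinsub P (S @ [s]))"
  shows "Z $$ (s,s) > 0"
proof -
  obtain v where "v \<in> carrier_vec (Suc (length S))" "v \<noteq> 0\<^sub>v (Suc (length S))"
    "v \<bullet> (prinsub P (S @ [s]) *\<^sub>v v) = Z $$ (s,s)"
    using schur_residual_pivot_quadratic_form[OF P sym S s Z] .
  then show ?thesis using pd unfolding posdef_def by (auto simp: prinsub_def)
qed

definition pivot_update :: "real mat \<Rightarrow> real mat \<Rightarrow> nat \<Rightarrow> real mat" where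
  "pivot_update Z W s =
     mat (dim_row W) (dim_col W) (\<lambda>(t,l). W $$ (t,l) - Z $$ (t,s) * W $$ (s,l) / Z $$ (s,s))"

lemma schur_residual_pivot_update:
  assumes P: "P \<in> carrier_mat N N" and sym: "transpose_mat P = P" and S: "set S \<subseteq> {..<N}"
    and s: "s < N" and Z: "schur_residual P S P Z" and W: "schur_residual P S B W"
    and B: "dim_row B = N" and pivot: "Z $$ (s,s) \<noteq> 0"
  shows "schur_residual P (S @ [s]) B (pivot_update Z W s)"
proof -
  let ?m = "length S"
  let ?S' = "S @ [s]"
  let ?d = "Z $$ (s,s)"
  have Wc: "W \<in> carrier_mat N (dim_col B)" using W B unfolding schur_residual_def by simp
  obtain CZ where CZ: "\<forall>t<N. \<forall>l<N. Z $$ (t,l) = P $$ (t,l) - (\<Sum>a<?m. P $$ (S!a,t) * CZ a l)"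
    using Z P unfolding schur_residual_def by auto
  obtain CW where CW: "\<forall>t<N. \<forall>l<dim_col B.
      W $$ (t,l) = B $$ (t,l) - (\<Sum>a<?m. P $$ (S!a,t) * CW a l)"
    using W B unfolding schur_residual_def by auto
  \<comment> \<open>column s of Z is P_{.,s} - P_S^T CZ_{.,s}, so subtracting W_{s,l}/d times it keeps the form\<close>
  define C where "C = (\<lambda>a l. if a < ?m then CW a l - CZ a s * (W $$ (s,l) / ?d) else W $$ (s,l) / ?d)"
  have entry: "pivot_update Z W s $$ (t,l) = B $$ (t,l) - (\<Sum>a<length ?S'. P $$ (?S'!a,t) * C a l)"
    if t: "t < N" and l: "l < dim_col B" for t l
  proof -
    define q where "q = W $$ (s,l) / ?d"
    have "(\<Sum>a<length ?S'. P $$ (?S'!a,t) * C a l)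
        = (\<Sum>a<?m. P $$ (S!a,t) * CW a l) - q * (\<Sum>a<?m. P $$ (S!a,t) * CZ a s) + P $$ (s,t) * q"
      by (simp add: C_def q_def[symmetric] nth_append algebra_simps sum_subtractf sum_distrib_left)
    also have "\<dots> = (B $$ (t,l) - W $$ (t,l)) - q * (P $$ (t,s) - Z $$ (t,s)) + P $$ (t,s) * q"
      using CW CZ t l s symmetric_mat_entry[OF sym] P by simp
    also have "\<dots> = B $$ (t,l) - (W $$ (t,l) - Z $$ (t,s) * q)"
      by (simp add: algebra_simps)
    also have "W $$ (t,l) - Z $$ (t,s) * q = pivot_update Z W s $$ (t,l)"
      using t l Wc by (simp add: pivot_update_def q_def)
    finally show ?thesis by simp
  qed
  have zero: "pivot_update Z W s $$ (t,l) = 0" if t: "t \<in> set ?S'" and l: "l < dim_col B" for t l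
  proof (cases "t \<in> set S")
    case True
    then have "Z $$ (t,s) = 0" "W $$ (t,l) = 0"
      using Z W s l P unfolding schur_residual_def by auto
    then show ?thesis using t S s l Wc by (auto simp: pivot_update_def)
  next
    case False
    then show ?thesis using t s l Wc pivot by (simp add: pivot_update_def)
  qed
  show ?thesis unfolding schur_residual_def
    using entry zero Wc B by (auto simp: pivot_update_def intro!: exI[of _ C])
qed

lemma pivot_update_eq_outer:
  assumes Z: "Z \<in> carrier_mat n n" and W: "W \<in> carrier_mat n m" and s: "s < n"
    and pivot: "Z $$ (s,s) > 0"
  shows "pivot_update Z W s = W - outer (Z $$ (s,s) powr (-1/2) \<cdot>\<^sub>v col Z s)
                                         (Z $$ (s,s) powr (-1/2) \<cdot>\<^sub>v row W s)"
proof (rule eq_matI)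
  let ?c = "Z $$ (s,s) powr (-1/2)"
  have c: "?c * ?c = 1 / Z $$ (s,s)"
    using pivot by (simp add: powr_add[symmetric] powr_minus_divide)
  fix i j assume "i < dim_row (W - outer (?c \<cdot>\<^sub>v col Z s) (?c \<cdot>\<^sub>v row W s))"
    "j < dim_col (W - outer (?c \<cdot>\<^sub>v col Z s) (?c \<cdot>\<^sub>v row W s))"
  then have ij: "i < n" "j < m" using Z W by (auto simp: outer_def)
  have "(W - outer (?c \<cdot>\<^sub>v col Z s) (?c \<cdot>\<^sub>v row W s)) $$ (i,j)
      = W $$ (i,j) - (?c * Z $$ (i,s)) * (?c * W $$ (s,j))"
    using Z W s ij by (simp add: outer_def)
  also have "(?c * Z $$ (i,s)) * (?c * W $$ (s,j)) = (?c * ?c) * (Z $$ (i,s) * W $$ (s,j))"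
    by (simp add: ac_simps)
  finally show "pivot_update Z W s $$ (i,j)
      = (W - outer (?c \<cdot>\<^sub>v col Z s) (?c \<cdot>\<^sub>v row W s)) $$ (i,j)"
    using W ij unfolding c by (simp add: pivot_update_def)
qed (use Z W in \<open>auto simp: pivot_update_def outer_def\<close>)

lemma Pxx_carrier: "X \<in> carrier_mat N M \<Longrightarrow> Pxx X lam \<in> carrier_mat N N"
  unfolding Pxx_def by auto

lemma Pxy_carrier: "X \<in> carrier_mat N M \<Longrightarrow> Y \<in> carrier_mat Ny M \<Longrightarrow> Pxy X Y \<in> carrier_mat N Ny"
  unfolding Pxy_def by auto

lemma transpose_Pxx: "transpose_mat (Pxx X lam) = Pxx X lam"
  unfolding Pxx_def by (intro eq_matI) (auto simp: comm_scalar_prod[of _ "dim_col X"])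

lemma transpose_Pxx_minus:
  assumes "X \<in> carrier_mat N M" "Xi \<in> carrier_mat N j"
  shows "transpose_mat (Pxx X lam - Xi * transpose_mat Xi) = Pxx X lam - Xi * transpose_mat Xi"
  using assms Pxx_carrier[OF assms(1)]
  by (subst transpose_minus[of _ N N]) (auto simp: transpose_mult transpose_Pxx)

lemma Qxx_residual:
  assumes X: "X \<in> carrier_mat N M" and S: "set S \<subseteq> {..<N}" and pd: "posdef (prinsub (Pxx X lam) S)"
  shows "schur_residual (Pxx X lam) S (Pxx X lam) (Qxx X lam S)"
  using schur_residual_Nil[OF Pxx_carrier[OF X, of lam]]
    schur_complement_residual[OF Pxx_carrier[OF X, of lam] transpose_Pxx S pd Pxx_carrier[OF X, of lam]]
  unfolding Qxx_def by auto

lemma Qxy_residual: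
  assumes X: "X \<in> carrier_mat N M" and Y: "Y \<in> carrier_mat Ny M"
    and S: "set S \<subseteq> {..<N}" and pd: "posdef (prinsub (Pxx X lam) S)"
  shows "schur_residual (Pxx X lam) S (Pxy X Y) (Qxy X Y lam S)"
  using schur_residual_Nil[OF Pxy_carrier[OF X Y]]
    schur_complement_residual[OF Pxx_carrier[OF X, of lam] transpose_Pxx S pd Pxy_carrier[OF X Y]]
  unfolding Qxy_def by auto

lemma Qxx_pivot_pos:
  assumes X: "X \<in> carrier_mat N M" and S: "set S \<subseteq> {..<N}" and s: "s < N"
    and pd: "posdef (prinsub (Pxx X lam) S)" and pd': "posdef (prinsub (Pxx X lam) (S @ [s]))"
  shows "Qxx X lam S $$ (s,s) > 0"
  by (rule schur_residual_pivot_pos[OF Pxx_carrier[OF X, of lam] transpose_Pxx S s Qxx_residual[OF X S pd] pd'])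

lemma Qxx_snoc:
  assumes X: "X \<in> carrier_mat N M" and S: "set S \<subseteq> {..<N}" and s: "s < N"
    and pd: "posdef (prinsub (Pxx X lam) S)" and pd': "posdef (prinsub (Pxx X lam) (S @ [s]))"
  shows "Qxx X lam (S @ [s]) = pivot_update (Qxx X lam S) (Qxx X lam S) s"
proof (rule schur_residual_unique[OF transpose_Pxx _ _ pd'])
  have Z: "schur_residual (Pxx X lam) S (Pxx X lam) (Qxx X lam S)" by (rule Qxx_residual[OF X S pd])
  show "set (S @ [s]) \<subseteq> {..<dim_row (Pxx X lam)}" using S s Pxx_carrier[OF X, of lam] by auto
  show "schur_residual (Pxx X lam) (S @ [s]) (Pxx X lam) (Qxx X lam (S @ [s]))"
    using Qxx_residual[OF X _ pd'] S s by auto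
  show "schur_residual (Pxx X lam) (S @ [s]) (Pxx X lam) (pivot_update (Qxx X lam S) (Qxx X lam S) s)"
    using schur_residual_pivot_update[OF Pxx_carrier[OF X, of lam] transpose_Pxx S s Z Z]
      Qxx_pivot_pos[OF X S s pd pd'] Pxx_carrier[OF X, of lam] by simp
qed simp

lemma Qxy_snoc:
  assumes X: "X \<in> carrier_mat N M" and Y: "Y \<in> carrier_mat Ny M" and S: "set S \<subseteq> {..<N}"
    and s: "s < N" and pd: "posdef (prinsub (Pxx X lam) S)"
    and pd': "posdef (prinsub (Pxx X lam) (S @ [s]))"
  shows "Qxy X Y lam (S @ [s]) = pivot_update (Qxx X lam S) (Qxy X Y lam S) s"
proof (rule schur_residual_unique[OF transpose_Pxx _ _ pd'])
  show "set (S @ [s]) \<subseteq> {..<dim_row (Pxx X lam)}" using S s Pxx_carrier[OF X, of lam] by auto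
  show "dim_row (Pxy X Y) = dim_row (Pxx X lam)" using Pxy_carrier[OF X Y] Pxx_carrier[OF X, of lam] by simp
  show "schur_residual (Pxx X lam) (S @ [s]) (Pxy X Y) (Qxy X Y lam (S @ [s]))"
    using Qxy_residual[OF X Y _ pd'] S s by auto
  show "schur_residual (Pxx X lam) (S @ [s]) (Pxy X Y) (pivot_update (Qxx X lam S) (Qxy X Y lam S) s)"
    using schur_residual_pivot_update[OF Pxx_carrier[OF X, of lam] transpose_Pxx S s
        Qxx_residual[OF X S pd] Qxy_residual[OF X Y S pd]]
      Qxx_pivot_pos[OF X S s pd pd'] Pxy_carrier[OF X Y] by simp
qed

lemma delta_vec_eq_col:
  assumes X: "X \<in> carrier_mat N M" and Xi: "Xi \<in> carrier_mat N j" and s: "s < N"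
  shows "delta_vec X lam Xi s = col (Pxx X lam - Xi * transpose_mat Xi) s"
  using X Xi s
  by (intro eq_vecI) (auto simp: delta_vec_def Pxx_def comm_scalar_prod[of _ M])

lemma theta_numerator_eq_row:
  assumes X: "X \<in> carrier_mat N M" and Y: "Y \<in> carrier_mat Ny M"
    and Xi: "Xi \<in> carrier_mat N j" and Th: "Th \<in> carrier_mat Ny j" and s: "s < N"
  shows "Y *\<^sub>v row X s - Th *\<^sub>v row Xi s = row (Pxy X Y - Xi * transpose_mat Th) s"
  using X Y Xi Th s
  by (intro eq_vecI) (auto simp: Pxy_def comm_scalar_prod[of _ M] comm_scalar_prod[of _ j])

lemma powr_minus_half: "0 \<le> (d::real) \<Longrightarrow> d powr (-1/2) = 1 / sqrt d"
  by (cases "d = 0") (simp_all add: powr_minus_divide powr_half_sqrt)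

lemma xi_vec_eq_row:
  assumes X: "X \<in> carrier_mat N M" and Xi: "Xi \<in> carrier_mat N j" and s: "s < N"
    and Z: "Z = Pxx X lam - Xi * transpose_mat Xi" and pivot: "Z $$ (s,s) \<ge> 0"
  shows "xi_vec X lam Xi s = Z $$ (s,s) powr (-1/2) \<cdot>\<^sub>v row Z s"
proof -
  have Zc: "Z \<in> carrier_mat N N" using Z Pxx_carrier[OF X, of lam] Xi by (simp add: minus_carrier_mat)
  have sym: "transpose_mat Z = Z" using transpose_Pxx_minus[OF X Xi] Z by simp
  have "row Z s = col Z s" using symmetric_mat_row_eq_col[OF sym] Zc s by simp
  then have "delta_vec X lam Xi s = row Z s" using delta_vec_eq_col[OF X Xi s] Z by simp
  moreover have "row Z s $ s = Z $$ (s,s)" using Zc s by simp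
  ultimately show ?thesis unfolding powr_minus_half[OF pivot] by (simp add: xi_vec_def)
qed

lemma theta_vec_eq_row:
  assumes X: "X \<in> carrier_mat N M" and Y: "Y \<in> carrier_mat Ny M"
    and Xi: "Xi \<in> carrier_mat N j" and Th: "Th \<in> carrier_mat Ny j" and s: "s < N"
    and Z: "Z = Pxx X lam - Xi * transpose_mat Xi" and W: "W = Pxy X Y - Xi * transpose_mat Th"
    and pivot: "Z $$ (s,s) \<ge> 0"
  shows "theta_vec X Y lam Xi Th s = Z $$ (s,s) powr (-1/2) \<cdot>\<^sub>v row W s"
proof -
  have "delta_vec X lam Xi s $ s = Z $$ (s,s)"
    using delta_vec_eq_col[OF X Xi s] Z Pxx_carrier[OF X, of lam] Xi s by simp
  then show ?thesis
    unfolding powr_minus_half[OF pivot] using theta_numerator_eq_row[OF X Y Xi Th s] W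
    by (simp add: theta_vec_def)
qed

lemma Qxx_snoc_eq_outer:
  assumes X: "X \<in> carrier_mat N M" and Xi: "Xi \<in> carrier_mat N j"
    and S: "set S \<subseteq> {..<N}" and s: "s < N"
    and pd: "posdef (prinsub (Pxx X lam) S)" and pd': "posdef (prinsub (Pxx X lam) (S @ [s]))"
    and QZ: "Qxx X lam S = Pxx X lam - Xi * transpose_mat Xi"
  shows "Qxx X lam (S @ [s]) = Qxx X lam S - outer (xi_vec X lam Xi s) (xi_vec X lam Xi s)"
proof -
  let ?Z = "Qxx X lam S"
  have Zc: "?Z \<in> carrier_mat N N" using QZ Pxx_carrier[OF X, of lam] Xi by (simp add: minus_carrier_mat)
  have pos: "?Z $$ (s,s) > 0" by (rule Qxx_pivot_pos[OF X S s pd pd'])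
  have sym: "transpose_mat ?Z = ?Z" using transpose_Pxx_minus[OF X Xi] QZ by simp
  have "row ?Z s = col ?Z s" using symmetric_mat_row_eq_col[OF sym] Zc s by simp
  then show ?thesis
    using Qxx_snoc[OF X S s pd pd'] pivot_update_eq_outer[OF Zc Zc s pos]
      xi_vec_eq_row[OF X Xi s QZ] pos by simp
qed

lemma Qxy_snoc_eq_outer:
  assumes X: "X \<in> carrier_mat N M" and Y: "Y \<in> carrier_mat Ny M"
    and Xi: "Xi \<in> carrier_mat N j" and Th: "Th \<in> carrier_mat Ny j"
    and S: "set S \<subseteq> {..<N}" and s: "s < N"
    and pd: "posdef (prinsub (Pxx X lam) S)" and pd': "posdef (prinsub (Pxx X lam) (S @ [s]))"
    and QZ: "Qxx X lam S = Pxx X lam - Xi * transpose_mat Xi"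
    and QW: "Qxy X Y lam S = Pxy X Y - Xi * transpose_mat Th"
  shows "Qxy X Y lam (S @ [s]) = Qxy X Y lam S - outer (xi_vec X lam Xi s) (theta_vec X Y lam Xi Th s)"
proof -
  let ?Z = "Qxx X lam S"
  have Zc: "?Z \<in> carrier_mat N N" using QZ Pxx_carrier[OF X, of lam] Xi by (simp add: minus_carrier_mat)
  have Wc: "Qxy X Y lam S \<in> carrier_mat N Ny" using QW Pxy_carrier[OF X Y] Xi Th by (simp add: minus_carrier_mat)
  have pos: "?Z $$ (s,s) > 0" by (rule Qxx_pivot_pos[OF X S s pd pd'])
  have sym: "transpose_mat ?Z = ?Z" using transpose_Pxx_minus[OF X Xi] QZ by simp
  have "row ?Z s = col ?Z s" using symmetric_mat_row_eq_col[OF sym] Zc s by simp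
  then show ?thesis
    using Qxy_snoc[OF X Y S s pd pd'] pivot_update_eq_outer[OF Zc Wc s pos]
      xi_vec_eq_row[OF X Xi s QZ] theta_vec_eq_row[OF X Y Xi Th s QZ QW] pos by simp
qed

lemma gset_Suc: "gset s (Suc j) = gset s j @ [s (Suc j)]"
  unfolding gset_def by simp

lemma greedy_seq_index_bound:
  "greedy_seq X Y lam p s \<Longrightarrow> m \<in> {1..p} \<Longrightarrow> s m < dim_row X"
  unfolding greedy_seq_def candidates_def by blast

lemma greedy_seq_gset_bound:
  "greedy_seq X Y lam p s \<Longrightarrow> m \<le> p \<Longrightarrow> set (gset s m) \<subseteq> {..<dim_row X}"
  unfolding gset_def using greedy_seq_index_bound by fastforce

lemma greedy_seq_posdef:
  assumes g: "greedy_seq X Y lam p s" and m: "m \<le> p"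
  shows "posdef (prinsub (Pxx X lam) (gset s m))"
proof (cases m)
  case 0
  then show ?thesis by (simp add: gset_def posdef_Nil)
next
  case (Suc j)
  then have "s m \<in> candidates X lam s m" using g m unfolding greedy_seq_def by simp
  then show ?thesis unfolding candidates_def Suc gset_Suc by simp
qed

lemma greedy_seq_step:
  assumes g: "greedy_seq X Y lam p s" and j: "Suc j \<le> p" and X: "X \<in> carrier_mat N M"
  shows "s (Suc j) < N" "set (gset s j) \<subseteq> {..<N}"
    "posdef (prinsub (Pxx X lam) (gset s j))"
    "posdef (prinsub (Pxx X lam) (gset s j @ [s (Suc j)]))"
  using greedy_seq_index_bound[OF g, of "Suc j"] greedy_seq_gset_bound[OF g, of j]
    greedy_seq_posdef[OF g, of j] greedy_seq_posdef[OF g, of "Suc j"] j X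
  by (auto simp: gset_Suc)

lemma XiTheta_invariant:
  assumes X: "X \<in> carrier_mat N M" and Y: "Y \<in> carrier_mat Ny M"
    and g: "greedy_seq X Y lam p s" and j: "j \<le> p"
  shows "fst (XiTheta X Y lam s j) \<in> carrier_mat N j \<and> snd (XiTheta X Y lam s j) \<in> carrier_mat Ny j
    \<and> Qxx X lam (gset s j) = Pxx X lam - fst (XiTheta X Y lam s j) * transpose_mat (fst (XiTheta X Y lam s j))
    \<and> Qxy X Y lam (gset s j) = Pxy X Y - fst (XiTheta X Y lam s j) * transpose_mat (snd (XiTheta X Y lam s j))"
  using j
proof (induction j)
  case 0
  then show ?case
    using X Y Pxx_carrier[OF X, of lam] Pxy_carrier[OF X Y] by (auto simp: Qxx_def Qxy_def gset_def)
next
  case (Suc j)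
  define Xi where "Xi = fst (XiTheta X Y lam s j)"
  define Th where "Th = snd (XiTheta X Y lam s j)"
  define xi where "xi = xi_vec X lam Xi (s (Suc j))"
  define th where "th = theta_vec X Y lam Xi Th (s (Suc j))"
  have Xi: "Xi \<in> carrier_mat N j" and Th: "Th \<in> carrier_mat Ny j"
    and QZ: "Qxx X lam (gset s j) = Pxx X lam - Xi * transpose_mat Xi"
    and QW: "Qxy X Y lam (gset s j) = Pxy X Y - Xi * transpose_mat Th"
    using Suc unfolding Xi_def Th_def by auto
  have XiTheta_Suc: "XiTheta X Y lam s (Suc j) = (append_col Xi xi, append_col Th th)"
    by (simp add: Xi_def Th_def xi_def th_def Let_def)
  note step = greedy_seq_step[OF g Suc.prems X]
  note s = step(1) and S = step(2) and pd = step(3) and pd' = step(4)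
  have dims: "dim_vec xi = N" "dim_vec th = Ny"
    using X Y Xi Th by (simp_all add: xi_def th_def xi_vec_def theta_vec_def delta_vec_def)
  have XX: "Xi * transpose_mat Xi \<in> carrier_mat N N" and XT: "Xi * transpose_mat Th \<in> carrier_mat N Ny"
    using Xi Th by auto
  have O: "outer xi xi \<in> carrier_mat N N" "outer xi th \<in> carrier_mat N Ny"
    using outer_carrier[of xi] dims by auto
  have "Qxx X lam (gset s (Suc j)) = Pxx X lam - (Xi * transpose_mat Xi + outer xi xi)"
    unfolding gset_Suc Qxx_snoc_eq_outer[OF X Xi S s pd pd' QZ] QZ xi_def[symmetric]
    by (rule minus_add_minus_mat[OF Pxx_carrier[OF X] XX O(1), symmetric])
  moreover have "Qxy X Y lam (gset s (Suc j)) = Pxy X Y - (Xi * transpose_mat Th + outer xi th)"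
    unfolding gset_Suc Qxy_snoc_eq_outer[OF X Y Xi Th S s pd pd' QZ QW] QW xi_def[symmetric]
      th_def[symmetric]
    by (rule minus_add_minus_mat[OF Pxy_carrier[OF X Y] XT O(2), symmetric])
  ultimately show ?case
    unfolding XiTheta_Suc fst_conv snd_conv
    using append_col_mult_transpose[OF Xi Xi] append_col_mult_transpose[OF Xi Th] dims
      append_col_carrier[OF Xi] append_col_carrier[OF Th] by simp
qed

theorem lemma3:
  fixes X Y :: "real mat" and N Ny M p k :: nat and lam :: real and s :: "nat \<Rightarrow> nat"
  assumes "X \<in> carrier_mat N M" and "Y \<in> carrier_mat Ny M" and "p \<le> N" and "lam \<ge> 0"
    and "greedy_seq X Y lam p s"
    and "k \<in> {1..p}"
  shows "let Xi_k = fst (XiTheta X Y lam s k); Th_k = snd (XiTheta X Y lam s k);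
             xi = xi_vec X lam (fst (XiTheta X Y lam s (k - 1))) (s k);
             th = theta_vec X Y lam (fst (XiTheta X Y lam s (k - 1)))
                    (snd (XiTheta X Y lam s (k - 1))) (s k);
             Qx = Qxx X lam (gset s (k - 1)); Qy = Qxy X Y lam (gset s (k - 1))
         in xi = (Qx $$ (s k, s k)) powr (-1/2) \<cdot>\<^sub>v row Qx (s k)
          \<and> th = (Qx $$ (s k, s k)) powr (-1/2) \<cdot>\<^sub>v row Qy (s k)
          \<and> Qxx X lam (gset s k) = Qx - outer xi xi
          \<and> Qxx X lam (gset s k) = Pxx X lam - Xi_k * transpose_mat Xi_k
          \<and> Qxy X Y lam (gset s k) = Qy - outer xi th
          \<and> Qxy X Y lam (gset s k) = Pxy X Y - Xi_k * transpose_mat Th_k"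
proof -
  note X = assms(1) and Y = assms(2) and g = assms(5)
  obtain j where k: "k = Suc j" and j: "Suc j \<le> p" using assms(6) by (cases k) auto
  define Xi where "Xi = fst (XiTheta X Y lam s j)"
  define Th where "Th = snd (XiTheta X Y lam s j)"
  have Xi: "Xi \<in> carrier_mat N j" and Th: "Th \<in> carrier_mat Ny j"
    and QZ: "Qxx X lam (gset s j) = Pxx X lam - Xi * transpose_mat Xi"
    and QW: "Qxy X Y lam (gset s j) = Pxy X Y - Xi * transpose_mat Th"
    using XiTheta_invariant[OF X Y g, of j] j unfolding Xi_def Th_def by auto
  note step = greedy_seq_step[OF g j X]
  note s = step(1) and S = step(2) and pd = step(3) and pd' = step(4)
  have pivot: "Qxx X lam (gset s j) $$ (s (Suc j), s (Suc j)) \<ge> 0"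
    using Qxx_pivot_pos[OF X S s pd pd'] by simp
  show ?thesis
    unfolding Let_def k diff_Suc_1 Xi_def[symmetric] Th_def[symmetric] gset_Suc
    using xi_vec_eq_row[OF X Xi s QZ pivot] theta_vec_eq_row[OF X Y Xi Th s QZ QW pivot]
      Qxx_snoc_eq_outer[OF X Xi S s pd pd' QZ] Qxy_snoc_eq_outer[OF X Y Xi Th S s pd pd' QZ QW]
      XiTheta_invariant[OF X Y g j, unfolded gset_Suc]
    by (simp add: Let_def Xi_def Th_def)
qed

end
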